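(* Let $d, C \ge 1$ be integers, let $\epsilon > 0$, and for each $c = 1, \dots, C$ let $\hat{Z}^c \in \mathbb{R}^{d \times n_c}$ with $n_c \ge 1$. Put $n = \sum_{c=1}^C n_c$ and let $\hat{Z} = [\hat{Z}^1, \hat{Z}^2, \dots, \hat{Z}^C] \in \mathbb{R}^{d \times n}$ be the horizontal concatenation. For a matrix $W \in \mathbb{R}^{d \times m}$ define the coding rate $$R(W, \epsilon) = \frac{1}{2} \log\det\Big(I_d + \frac{1}{m \epsilon} W W^\top\Big),$$ and define $$\mathrm{TrR} = R(\hat{Z}, \epsilon) - \sum_{c=1}^C \frac{n_c}{n} R(\hat{Z}^c, \epsilon).$$ Then: (i) $\mathrm{TrR} \ge 0$, and equality holds when $\frac{1}{n}\hat{Z}\hat{Z}^\top = \frac{1}{n_c}\hat{Z}^c (\hat{Z}^c)^\top$ for all $c = 1, \dots, C$. (ii) $$\mathrm{TrR} \le \frac{1}{2} \sum_{c=1}^{C} \left( \log\det\Big(I_d + \frac{1}{n \epsilon} \hat{Z}^c (\hat{Z}^c)^\top\Big) - \frac{n_c}{n} \log\det\Big(I_d + \frac{1}{n_c \epsilon} \hat{Z}^c (\hat{Z}^c)^\top\Big) \right),$$ and equality holds when $\hat{Z}^{c_1} (\hat{Z}^{c_2})^\top = 0$ for all $1 \le c_1 < c_2 \le C$.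
   Context: $I_d$ denotes the $d \times d$ identity matrix and $\log\det$ is the logarithm of the determinant (of a symmetric positive definite matrix). The columns of $\hat{Z}^c$ are thought of as feature vectors of the samples in class $c$; $\mathrm{TrR}$ is the paper's "TransRate" score. *)

theory Defs
  imports "HOL-Analysis.Analysis"
begin

text \<open>A d x m real matrix is represented by the list of its m columns,
  each a vector in real^'d (the dimension d is the finite type 'd).
  Horizontal concatenation of matrices is concatenation of column lists.\<close>

definition gram :: "(real^'d) list \<Rightarrow> real^'d^'d" where
  "gram W = (\<chi> i j. \<Sum>w\<leftarrow>W. w$i * w$j)"

definition coding_rate :: "(real^'d) list \<Rightarrow> real \<Rightarrow> real" where
  "coding_rate W eps =
     1/2 * ln (det (mat 1 + (1 / (real (length W) * eps)) *\<^sub>R gram W))"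

definition TrR :: "(real^'d) list list \<Rightarrow> real \<Rightarrow> real" where
  "TrR Zs eps =
     coding_rate (concat Zs) eps
     - (\<Sum>c<length Zs. real (length (Zs!c)) / real (length (concat Zs))
                        * coding_rate (Zs!c) eps)"

end

theory Submission
  imports Defs
begin

(* The class matrices M_c = I + Z^c Z^c^T / (n_c eps) average, with weights n_c / n, to
   M = I + Z Z^T / (n eps). Hence TrR = (1/2) (log det M - sum_c (n_c / n) log det M_c) >= 0 is
   the concavity of log det on positive definite matrices. It follows from the tangent inequality
   log det N <= log det M + tr (M^-1 (N - M)), which a congruence turning M into I reduces to
   log det P <= tr P - d, that is, to log x <= x - 1 on the eigenvalues of P.

   The bound in (ii) exceeds TrR by (1/2) (sum_c log det (I + k G_c) - log det (I + k sum_c G_c)),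
   where k = 1 / (n eps) and G_c = Z^c Z^c^T. So (ii) reduces to
   det (I + A + G) <= det (I + A) det (I + G) for positive semidefinite A and a Gram matrix G.
   This follows by adding the columns v of G one at a time, using the matrix determinant lemma
   det (P + v v^T) = det P (1 + v^T P^-1 v) and the fact that v^T P^-1 v decreases as P grows.
   If A annihilates the columns of G, then P^-1 v does not depend on A and every step is an
   equality. *)

section \<open>Matrix algebra\<close>

definition diag_matrix :: "('n \<Rightarrow> real) \<Rightarrow> real^'n^'n" where
  "diag_matrix l = (\<chi> i j. if i = j then l i else 0)"

lemma diag_matrix_mult_vector: "diag_matrix l *v x = (\<chi> i. l i * x $ i)"
  by (simp add: vec_eq_iff diag_matrix_def matrix_vector_mult_def if_distrib if_distribR cong: if_cong)

lemma transpose_diag_matrix: "transpose (diag_matrix l) = diag_matrix l"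
  by (simp add: vec_eq_iff transpose_def diag_matrix_def)

lemma matrix_mult_diag_matrix: "(Q ** diag_matrix l) $ i $ j = Q $ i $ j * l j"
  by (simp add: matrix_matrix_mult_def diag_matrix_def if_distrib cong: if_cong)

lemma diag_matrix_mult: "diag_matrix a ** diag_matrix b = diag_matrix (\<lambda>i. a i * b i)"
  by (simp add: vec_eq_iff matrix_mult_diag_matrix) (simp add: diag_matrix_def)

lemma det_diag_matrix: "det (diag_matrix l) = (\<Prod>i\<in>UNIV. l i)"
  by (subst det_diagonal) (auto simp: diag_matrix_def)

lemma trace_diag_matrix: "trace (diag_matrix l) = (\<Sum>i\<in>UNIV. l i)"
  by (simp add: trace_def diag_matrix_def)

lemma orthogonal_matrix_mult_eq_0:
  fixes Q :: "real^'n^'n"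
  assumes "orthogonal_matrix Q" "Q *v x = 0"
  shows "x = 0"
proof -
  have "x = (transpose Q ** Q) *v x"
    using assms(1) by (simp add: orthogonal_matrix)
  also have "\<dots> = 0"
    using assms(2) by (simp flip: matrix_vector_mul_assoc)
  finally show ?thesis .
qed

lemma det_orthogonal_congruence:
  fixes Q X :: "real^'n^'n"
  assumes "orthogonal_matrix Q"
  shows "det (transpose Q ** X ** Q) = det X"
proof -
  have "det Q * det Q = 1"
    using det_orthogonal_matrix[OF assms] by auto
  then show ?thesis
    by (simp add: det_mul)
qed

lemma matrix_add_rdistrib:
  fixes A B C :: "real^'n^'n"
  shows "(A + B) ** C = A ** C + B ** C"
  by (simp add: vec_eq_iff matrix_matrix_mult_def sum.distrib distrib_right)

lemma matrix_diff_ldistrib: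
  fixes A B C :: "real^'n^'n"
  shows "C ** (A - B) = C ** A - C ** B"
  by (simp add: vec_eq_iff matrix_matrix_mult_def sum_subtractf right_diff_distrib)

lemma trace_scaleR: "trace (c *\<^sub>R A) = c * trace (A :: real^'n^'n)"
  by (simp add: trace_def sum_distrib_left)

lemma trace_congruence:
  fixes L X :: "real^'n^'n"
  shows "trace (transpose L ** X ** L) = trace ((L ** transpose L) ** X)"
proof -
  have "trace ((transpose L ** X) ** L) = trace (L ** (transpose L ** X))"
    by (rule trace_mul_sym)
  then show ?thesis
    by (simp add: matrix_mul_assoc)
qed

lemma linear_trace_mult_left: "linear (\<lambda>A :: real^'n^'n. trace (X ** A))"
  by (rule linearI)
    (simp_all add: matrix_add_ldistrib trace_add matrix_scalar_ac trace_scaleR flip: scalar_matrix_assoc)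

lemma linear_transpose: "linear (transpose :: real^'n^'m \<Rightarrow> real^'m^'n)"
  by (rule linearI) (simp_all add: vec_eq_iff transpose_def)

lemma linear_quadratic_form: "linear (\<lambda>A :: real^'n^'n. x \<bullet> (A *v x))"
  by (rule linearI)
    (simp_all add: matrix_vector_mult_add_rdistrib inner_add_right flip: scaleR_matrix_vector_assoc)

lemma matrix_inv_eqI:
  fixes A B :: "real^'n^'n"
  assumes "B ** A = mat 1"
  shows "matrix_inv A = B"
proof -
  have "A ** B = mat 1"
    using assms matrix_left_right_inverse by blast
  then have "A ** matrix_inv A = mat 1"
    using assms unfolding matrix_inv_def by (rule someI2[where Q = "\<lambda>A'. A ** A' = mat 1", OF conjI]) auto
  then have "B ** (A ** matrix_inv A) = B"
    by simp
  then show ?thesis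
    using assms by (simp add: matrix_mul_assoc)
qed

section \<open>The spectral theorem\<close>

definition symmetric_matrix :: "real^'n^'n \<Rightarrow> bool" where
  "symmetric_matrix A \<longleftrightarrow> transpose A = A"

lemma symmetric_matrix_inner:
  "symmetric_matrix A \<Longrightarrow> x \<bullet> (A *v y) = (A *v x) \<bullet> y"
  by (metis dot_lmul_matrix symmetric_matrix_def vector_transpose_matrix)

lemma linear_le_quadratic_imp_zero:
  fixes a b :: real
  assumes "\<And>t. 2 * t * a \<le> t\<^sup>2 * b"
  shows "a = 0"
proof -
  define k where "k = \<bar>b\<bar> + 1"
  have "k > 0" by (simp add: k_def)
  have "2 * (a / k) * a \<le> (a / k)\<^sup>2 * b" using assms .
  then have "2 * a\<^sup>2 * k \<le> a\<^sup>2 * b"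
    using \<open>k > 0\<close> by (simp add: field_simps power2_eq_square)
  also have "\<dots> \<le> a\<^sup>2 * (k - 1)"
    unfolding k_def by (intro mult_left_mono) auto
  finally have "a\<^sup>2 * (k + 1) \<le> 0" by (simp add: algebra_simps)
  then show "a = 0"
    using \<open>k > 0\<close> by (simp add: mult_le_0_iff)
qed

lemma symmetric_matrix_maximizer_is_eigenvector:
  fixes A :: "real^'n^'n"
  assumes "symmetric_matrix A" "subspace S" "\<forall>x\<in>S. A *v x \<in> S"
    and "x \<in> S" "x \<bullet> x = 1"
    and max: "\<forall>z\<in>S. z \<bullet> (A *v z) \<le> (x \<bullet> (A *v x)) * (z \<bullet> z)"
  shows "A *v x = (x \<bullet> (A *v x)) *\<^sub>R x"
proof -
  define l where "l = x \<bullet> (A *v x)"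
  define r where "r = A *v x - l *\<^sub>R x"
  have "r \<in> S"
    unfolding r_def using assms(2-4) by (simp add: subspace_diff subspace_scale)
  have "x \<bullet> r = 0"
    unfolding r_def l_def using \<open>x \<bullet> x = 1\<close> by (simp add: inner_diff_right)
  have "r \<bullet> (A *v x) = r \<bullet> r" and "x \<bullet> (A *v r) = r \<bullet> r"
    using \<open>x \<bullet> r = 0\<close> symmetric_matrix_inner[OF assms(1), of x r]
    by (simp_all add: r_def inner_diff_left inner_diff_right inner_commute)
  \<comment> \<open>maximality of x tested at x + t r\<close>
  have "2 * t * (r \<bullet> r) \<le> t\<^sup>2 * (l * (r \<bullet> r) - r \<bullet> (A *v r))" for t
  proof -
    have "x + t *\<^sub>R r \<in> S"
      using \<open>x \<in> S\<close> \<open>r \<in> S\<close> assms(2) by (simp add: subspace_add subspace_scale)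
    then have "(x + t *\<^sub>R r) \<bullet> (A *v (x + t *\<^sub>R r)) \<le> l * ((x + t *\<^sub>R r) \<bullet> (x + t *\<^sub>R r))"
      using max l_def by blast
    then show ?thesis
      using \<open>x \<bullet> x = 1\<close> \<open>x \<bullet> r = 0\<close> \<open>r \<bullet> (A *v x) = r \<bullet> r\<close> \<open>x \<bullet> (A *v r) = r \<bullet> r\<close>
      by (simp add: matrix_vector_right_distrib matrix_vector_mult_scaleR inner_add_left
          inner_add_right inner_commute[of r x] l_def power2_eq_square algebra_simps)
  qed
  then have "r \<bullet> r = 0" by (rule linear_le_quadratic_imp_zero)
  then show ?thesis by (simp add: r_def l_def)
qed

lemma symmetric_matrix_invariant_subspace_eigenvector:
  fixes A :: "real^'n^'n"
  assumes "symmetric_matrix A" "subspace S" "S \<noteq> {0}" "\<forall>x\<in>S. A *v x \<in> S"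
  obtains x l where "x \<in> S" "norm x = 1" "A *v x = l *\<^sub>R x"
proof -
  let ?K = "S \<inter> sphere 0 1"
  let ?q = "\<lambda>x. x \<bullet> (A *v x)"
  obtain y where "y \<in> S" "y \<noteq> 0"
    using assms(2,3) subspace_0 by blast
  then have "y /\<^sub>R norm y \<in> ?K"
    using assms(2) by (simp add: subspace_scale)
  moreover have "compact ?K"
    by (simp add: assms(2) closed_subspace compact_Int_closed compact_sphere Int_commute[of S])
  moreover have "continuous_on ?K ?q"
    by (intro continuous_intros matrix_vector_mult_linear_continuous_on[THEN continuous_on_subset]) auto
  ultimately obtain x where "x \<in> ?K" and x_max: "\<forall>z\<in>?K. ?q z \<le> ?q x"
    using continuous_attains_sup[of ?K ?q] by blast
  then have "x \<in> S" "norm x = 1" "x \<bullet> x = 1"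
    by (auto simp: norm_eq_1)
  have "?q z \<le> ?q x * (z \<bullet> z)" if "z \<in> S" for z
  proof (cases "z = 0")
    case False
    then have "z /\<^sub>R norm z \<in> ?K"
      using that assms(2) by (simp add: subspace_scale)
    then have "?q (z /\<^sub>R norm z) \<le> ?q x"
      using x_max by blast
    moreover have "?q (z /\<^sub>R norm z) = ?q z / (z \<bullet> z)"
      by (simp add: matrix_vector_mult_scaleR power2_norm_eq_inner[symmetric]
          power2_eq_square divide_simps)
    ultimately show ?thesis
      using False by (simp add: pos_divide_le_eq mult.commute)
  qed simp
  then have "A *v x = ?q x *\<^sub>R x"
    using symmetric_matrix_maximizer_is_eigenvector assms(1,2,4) \<open>x \<in> S\<close> \<open>x \<bullet> x = 1\<close> by blast
  then show ?thesis
    using that \<open>x \<in> S\<close> \<open>norm x = 1\<close> by blast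
qed

lemma span_insert_unit_orthogonal_complement:
  assumes "subspace S" "x \<in> S" "x \<bullet> x = 1" "span B = S \<inter> {y. x \<bullet> y = 0}"
  shows "span (insert x B) = S"
proof
  show "S \<subseteq> span (insert x B)"
  proof
    fix z
    assume "z \<in> S"
    then have "z - (x \<bullet> z) *\<^sub>R x \<in> span B"
      using assms by (simp add: subspace_diff subspace_scale inner_diff_right)
    then show "z \<in> span (insert x B)"
      unfolding span_breakdown_eq by blast
  qed
  show "span (insert x B) \<subseteq> S"
    using assms span_superset[of B] by (intro span_minimal) auto
qed

lemma symmetric_matrix_orthonormal_eigenbasis:
  fixes A :: "real^'n^'n"
  assumes "symmetric_matrix A" "subspace S" "\<forall>x\<in>S. A *v x \<in> S"
  shows "\<exists>B. B \<subseteq> S \<and> pairwise orthogonal B \<and> span B = S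
           \<and> (\<forall>x\<in>B. norm x = 1 \<and> (\<exists>l. A *v x = l *\<^sub>R x))"
  using assms(2,3)
proof (induction "dim S" arbitrary: S rule: less_induct)
  case less
  show ?case
  proof (cases "S = {0}")
    case True
    then show ?thesis by (intro exI[of _ "{}"]) auto
  next
    case False
    obtain x l where "x \<in> S" "norm x = 1" "A *v x = l *\<^sub>R x"
      using symmetric_matrix_invariant_subspace_eigenvector[OF assms(1) less.prems(1) False less.prems(2)] .
    then have "x \<bullet> x = 1" by (simp add: norm_eq_1)
    define S' where "S' = S \<inter> {y. x \<bullet> y = 0}"
    have "subspace S'"
      unfolding S'_def by (intro subspace_inter less.prems(1) subspace_hyperplane)
    have "\<forall>y\<in>S'. A *v y \<in> S'"
      using less.prems(2) symmetric_matrix_inner[OF assms(1), of x] \<open>A *v x = l *\<^sub>R x\<close>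
      by (auto simp: S'_def)
    have "x \<notin> S'"
      using \<open>x \<bullet> x = 1\<close> by (simp add: S'_def)
    then have "S' \<subset> S"
      using \<open>x \<in> S\<close> unfolding S'_def by blast
    then have "dim S' < dim S"
      using dim_psubset \<open>subspace S'\<close> less.prems(1) by (metis span_eq_iff)
    then obtain B where B: "B \<subseteq> S'" "pairwise orthogonal B" "span B = S'"
        "\<forall>y\<in>B. norm y = 1 \<and> (\<exists>l. A *v y = l *\<^sub>R y)"
      using less.hyps \<open>subspace S'\<close> \<open>\<forall>y\<in>S'. A *v y \<in> S'\<close> by blast
    then have "span (insert x B) = S"
      using span_insert_unit_orthogonal_complement less.prems(1) \<open>x \<in> S\<close> \<open>x \<bullet> x = 1\<close>
      by (simp add: S'_def)
    moreover have "pairwise orthogonal (insert x B)"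
      using B(1,2) by (auto simp: pairwise_insert S'_def orthogonal_def inner_commute)
    ultimately show ?thesis
      using B \<open>x \<in> S\<close> \<open>norm x = 1\<close> \<open>A *v x = l *\<^sub>R x\<close>
      by (intro exI[of _ "insert x B"]) (auto simp: S'_def)
  qed
qed

lemma orthonormal_basis_card:
  fixes B :: "(real^'n) set"
  assumes "pairwise orthogonal B" "\<forall>x\<in>B. norm x = 1" "span B = UNIV"
  shows "finite B" "card B = CARD('n)"
proof -
  have "independent B"
    using assms(1,2) pairwise_orthogonal_independent by force
  then show "finite B"
    by (rule finiteI_independent)
  have "card B = dim B"
    using \<open>independent B\<close> by (simp add: dim_eq_card_independent)
  also have "\<dots> = CARD('n)"
    using assms(3) dim_span[of B] by (simp add: dim_UNIV)
  finally show "card B = CARD('n)" .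
qed

theorem spectral_theorem:
  fixes A :: "real^'n^'n"
  assumes "symmetric_matrix A"
  obtains Q l where "orthogonal_matrix Q" "transpose Q ** A ** Q = diag_matrix l"
proof -
  obtain B where B: "pairwise orthogonal B" "span B = UNIV"
      "\<forall>x\<in>B. norm x = 1 \<and> (\<exists>l. A *v x = l *\<^sub>R x)"
    using symmetric_matrix_orthonormal_eigenbasis[OF assms, of UNIV] by auto
  then obtain f where f: "bij_betw f (UNIV :: 'n set) B"
    using orthonormal_basis_card[of B] finite_same_card_bij[OF finite_class.finite_UNIV]
    by (metis bij_betw_inv)
  have "\<forall>j. \<exists>l. A *v f j = l *\<^sub>R f j"
    using bij_betwE[OF f] B(3) by blast
  then obtain l where l: "\<And>j. A *v f j = l j *\<^sub>R f j"
    by metis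
  define Q where "Q = (\<chi> i j. f j $ i)"
  have "column j Q = f j" for j
    by (simp add: Q_def column_def vec_eq_iff)
  moreover have "norm (f j) = 1" for j
    using bij_betwE[OF f] B(3) by blast
  moreover have "orthogonal (f i) (f j)" if "i \<noteq> j" for i j
    using B(1) f that by (auto simp: pairwise_def bij_betw_def inj_on_def)
  ultimately have "orthogonal_matrix Q"
    by (simp add: orthogonal_matrix_orthonormal_columns)
  have "(A ** Q) $ i $ j = (A *v f j) $ i" for i j
    by (simp add: matrix_matrix_mult_def matrix_vector_mult_def Q_def)
  then have "A ** Q = Q ** diag_matrix l"
    by (simp add: vec_eq_iff matrix_mult_diag_matrix l Q_def)
  then have "transpose Q ** A ** Q = diag_matrix l"
    using \<open>orthogonal_matrix Q\<close> unfolding orthogonal_matrix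
    by (metis matrix_mul_assoc matrix_mul_lid)
  with \<open>orthogonal_matrix Q\<close> show ?thesis ..
qed

section \<open>Positive definite matrices\<close>

definition pos_semidef :: "real^'n^'n \<Rightarrow> bool" where
  "pos_semidef A \<longleftrightarrow> symmetric_matrix A \<and> (\<forall>x. 0 \<le> x \<bullet> (A *v x))"

definition pos_def :: "real^'n^'n \<Rightarrow> bool" where
  "pos_def A \<longleftrightarrow> symmetric_matrix A \<and> (\<forall>x. x \<noteq> 0 \<longrightarrow> 0 < x \<bullet> (A *v x))"

lemma inner_congruence:
  fixes L N :: "real^'n^'n"
  shows "x \<bullet> ((transpose L ** N ** L) *v y) = (L *v x) \<bullet> (N *v (L *v y))"
proof -
  have "x \<bullet> (transpose L *v z) = (L *v x) \<bullet> z" for z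
    by (metis dot_lmul_matrix vector_transpose_matrix)
  then show ?thesis
    by (simp flip: matrix_vector_mul_assoc)
qed

lemma symmetric_matrix_congruence:
  "symmetric_matrix N \<Longrightarrow> symmetric_matrix (transpose L ** N ** L)"
  by (simp add: symmetric_matrix_def matrix_transpose_mul matrix_mul_assoc)

lemma pos_def_congruence:
  fixes L N :: "real^'n^'n"
  assumes "pos_def N" and "\<And>x. L *v x = 0 \<Longrightarrow> x = 0"
  shows "pos_def (transpose L ** N ** L)"
  using assms by (auto simp: pos_def_def symmetric_matrix_congruence inner_congruence)

lemma pos_def_diag_matrix:
  assumes "pos_def (diag_matrix l)"
  shows "l i > 0"
proof -
  have "0 < axis i 1 \<bullet> (diag_matrix l *v axis i 1)"
    using assms by (simp add: pos_def_def)
  also have "\<dots> = l i"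
    by (simp add: diag_matrix_mult_vector inner_vec_def axis_def if_distrib if_distribR cong: if_cong)
  finally show ?thesis .
qed

lemma pos_def_diagonalization:
  fixes A :: "real^'n^'n"
  assumes "pos_def A"
  obtains Q l where "orthogonal_matrix Q" "transpose Q ** A ** Q = diag_matrix l" "\<And>i. l i > 0"
proof -
  obtain Q l where Q: "orthogonal_matrix Q" "transpose Q ** A ** Q = diag_matrix l"
    using spectral_theorem assms pos_def_def by blast
  then have "pos_def (diag_matrix l)"
    using pos_def_congruence[OF assms] orthogonal_matrix_mult_eq_0[OF Q(1)] by fastforce
  then show ?thesis
    using that Q pos_def_diag_matrix by blast
qed

lemma pos_def_det_pos:
  assumes "pos_def A"
  shows "det A > 0"
proof -
  obtain Q l where "orthogonal_matrix Q" "transpose Q ** A ** Q = diag_matrix l" "\<And>i. l i > 0"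
    using pos_def_diagonalization[OF assms] by blast
  then have "det A = (\<Prod>i\<in>UNIV. l i)"
    using det_orthogonal_congruence[of Q A] by (simp add: det_diag_matrix)
  then show ?thesis
    using \<open>\<And>i. l i > 0\<close> by (simp add: prod_pos)
qed

lemma pos_def_congruent_to_identity:
  fixes P :: "real^'n^'n"
  assumes "pos_def P"
  obtains L :: "real^'n^'n" where "transpose L ** P ** L = mat 1" "matrix_inv P = L ** transpose L"
proof -
  obtain Q l where Q: "orthogonal_matrix Q" "transpose Q ** P ** Q = diag_matrix l"
      and l: "\<And>i. l i > 0"
    using pos_def_diagonalization[OF assms] by blast
  define D where "D = diag_matrix (\<lambda>i. 1 / sqrt (l i))"
  define L where "L = Q ** D"
  have "transpose L ** P ** L = D ** (transpose Q ** P ** Q) ** D"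
    by (simp add: L_def D_def matrix_transpose_mul matrix_mul_assoc transpose_diag_matrix)
  also have "\<dots> = diag_matrix (\<lambda>i. 1 / sqrt (l i) * l i * (1 / sqrt (l i)))"
    by (simp add: Q(2) D_def diag_matrix_mult)
  also have "\<dots> = mat 1"
  proof -
    have "1 / sqrt (l i) * l i * (1 / sqrt (l i)) = 1" for i
      using l[of i] by (simp add: field_simps)
    then show ?thesis
      by (simp add: diag_matrix_def mat_def)
  qed
  finally have LPL: "transpose L ** P ** L = mat 1" .
  then have "L ** (transpose L ** P) = mat 1"
    using matrix_left_right_inverse by blast
  then have "matrix_inv P = L ** transpose L"
    by (intro matrix_inv_eqI) (simp add: matrix_mul_assoc)
  with LPL show ?thesis
    using that by blast
qed

lemma pos_semidef_add: "pos_semidef A \<Longrightarrow> pos_semidef B \<Longrightarrow> pos_semidef (A + B)"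
  by (simp add: pos_semidef_def symmetric_matrix_def matrix_vector_mult_add_rdistrib inner_add_right
      transpose_def vec_eq_iff add_nonneg_nonneg)

lemma pos_semidef_scaleR: "0 \<le> k \<Longrightarrow> pos_semidef A \<Longrightarrow> pos_semidef (k *\<^sub>R A)"
  by (simp add: pos_semidef_def symmetric_matrix_def transpose_scalar
      flip: scaleR_matrix_vector_assoc)

lemma pos_def_I_plus_pos_semidef:
  fixes A :: "real^'n^'n"
  assumes "pos_semidef A"
  shows "pos_def (mat 1 + A)"
  unfolding pos_def_def
proof (intro conjI allI impI)
  show "symmetric_matrix (mat 1 + A)"
    using assms by (simp add: pos_semidef_def symmetric_matrix_def transpose_def vec_eq_iff mat_def)
  fix x :: "real^'n"
  assume "x \<noteq> 0"
  then have "0 < x \<bullet> x + x \<bullet> (A *v x)"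
    using assms by (simp add: pos_semidef_def add_pos_nonneg)
  then show "0 < x \<bullet> ((mat 1 + A) *v x)"
    by (simp add: matrix_vector_mult_add_rdistrib inner_add_right)
qed

lemma pos_def_convex_combination:
  fixes M :: "'i \<Rightarrow> real^'n^'n"
  assumes "finite I" "\<And>i. i \<in> I \<Longrightarrow> pos_def (M i)" "\<And>i. i \<in> I \<Longrightarrow> 0 \<le> w i" "sum w I = 1"
  shows "pos_def (\<Sum>i\<in>I. w i *\<^sub>R M i)"
  unfolding pos_def_def
proof (intro conjI allI impI)
  show "symmetric_matrix (\<Sum>i\<in>I. w i *\<^sub>R M i)"
    using assms(2) by (simp add: symmetric_matrix_def pos_def_def linear_sum[OF linear_transpose]
        linear_scale[OF linear_transpose] o_def)
  fix x :: "real^'n"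
  assume "x \<noteq> 0"
  obtain i where "i \<in> I" "w i > 0"
  proof (rule ccontr)
    assume "\<not> thesis"
    with that have "\<forall>i\<in>I. w i = 0"
      using assms(3) by force
    then show False
      using assms(4) by simp
  qed
  have "0 < (\<Sum>i\<in>I. w i * (x \<bullet> (M i *v x)))"
    using assms(1-3) \<open>x \<noteq> 0\<close> \<open>i \<in> I\<close> \<open>w i > 0\<close>
    by (intro sum_pos2[of I i]) (auto simp: pos_def_def less_imp_le)
  also have "\<dots> = x \<bullet> ((\<Sum>i\<in>I. w i *\<^sub>R M i) *v x)"
    by (simp add: linear_sum[OF linear_quadratic_form] linear_scale[OF linear_quadratic_form] o_def)
  finally show "0 < x \<bullet> ((\<Sum>i\<in>I. w i *\<^sub>R M i) *v x)" .
qed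

lemma pos_def_matrix_inv_right:
  fixes P :: "real^'n^'n"
  assumes "pos_def P"
  shows "P ** matrix_inv P = mat 1"
proof -
  obtain L :: "real^'n^'n" where "transpose L ** P ** L = mat 1" "matrix_inv P = L ** transpose L"
    using pos_def_congruent_to_identity[OF assms] by blast
  then have "L ** (transpose L ** P) = mat 1"
    using matrix_left_right_inverse by blast
  then show ?thesis
    using \<open>matrix_inv P = L ** transpose L\<close> matrix_left_right_inverse
    by (metis matrix_mul_assoc)
qed

lemma matrix_inv_quadratic_form_ge:
  fixes P :: "real^'n^'n"
  assumes "pos_def P"
  shows "2 * (v \<bullet> z) - z \<bullet> (P *v z) \<le> v \<bullet> (matrix_inv P *v v)"
proof -
  define y where "y = matrix_inv P *v v"
  have "P *v y = v"
    by (simp add: y_def matrix_vector_mul_assoc pos_def_matrix_inv_right[OF assms])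
  have "0 \<le> (z - y) \<bullet> (P *v (z - y))"
    using assms by (cases "z = y") (auto simp: pos_def_def less_imp_le)
  also have "\<dots> = z \<bullet> (P *v z) - 2 * (v \<bullet> z) + v \<bullet> y"
    using symmetric_matrix_inner[of P y z] assms \<open>P *v y = v\<close>
    by (simp add: pos_def_def matrix_vector_mult_diff_distrib inner_diff_left inner_diff_right
        inner_commute)
  finally show ?thesis
    by (simp add: y_def)
qed

lemma matrix_inv_quadratic_form_nonneg:
  "pos_def P \<Longrightarrow> 0 \<le> v \<bullet> (matrix_inv P *v v)"
  using matrix_inv_quadratic_form_ge[of P v 0] by simp

lemma matrix_inv_quadratic_form_antimono:
  fixes P Q :: "real^'n^'n"
  assumes "pos_def P" "pos_def Q" "\<And>x. x \<bullet> (P *v x) \<le> x \<bullet> (Q *v x)"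
  shows "v \<bullet> (matrix_inv Q *v v) \<le> v \<bullet> (matrix_inv P *v v)"
proof -
  define z where "z = matrix_inv Q *v v"
  have "Q *v z = v"
    by (simp add: z_def matrix_vector_mul_assoc pos_def_matrix_inv_right[OF assms(2)])
  then have "v \<bullet> (matrix_inv Q *v v) = 2 * (v \<bullet> z) - z \<bullet> (Q *v z)"
    by (simp add: z_def[symmetric] inner_commute)
  also have "\<dots> \<le> 2 * (v \<bullet> z) - z \<bullet> (P *v z)"
    using assms(3) by simp
  also have "\<dots> \<le> v \<bullet> (matrix_inv P *v v)"
    by (rule matrix_inv_quadratic_form_ge[OF assms(1)])
  finally show ?thesis .
qed

section \<open>Concavity of the log-determinant\<close>

lemma ln_det_le_trace:
  fixes P :: "real^'n^'n"
  assumes "pos_def P"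
  shows "ln (det P) \<le> trace P - CARD('n)"
proof -
  obtain Q l where Q: "orthogonal_matrix Q" "transpose Q ** P ** Q = diag_matrix l"
      and l: "\<And>i. l i > 0"
    using pos_def_diagonalization[OF assms] by blast
  have "det P = (\<Prod>i\<in>UNIV. l i)"
    using det_orthogonal_congruence[OF Q(1), of P] by (simp add: Q(2) det_diag_matrix)
  then have "ln (det P) = (\<Sum>i\<in>UNIV. ln (l i))"
    using l by (simp add: ln_prod less_imp_neq[symmetric])
  also have "\<dots> \<le> (\<Sum>i\<in>UNIV. l i - 1)"
    using l by (intro sum_mono ln_le_minus_one)
  also have "\<dots> = trace P - CARD('n)"
    using trace_congruence[of Q P] Q by (simp add: sum_subtractf trace_diag_matrix orthogonal_matrix_def)
  finally show ?thesis .
qed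

lemma ln_det_le_tangent:
  fixes M N :: "real^'n^'n"
  assumes "pos_def M" "pos_def N"
  shows "ln (det N) \<le> ln (det M) + trace (matrix_inv M ** (N - M))"
proof -
  obtain L :: "real^'n^'n" where LML: "transpose L ** M ** L = mat 1"
      and inv: "matrix_inv M = L ** transpose L"
    using pos_def_congruent_to_identity[OF assms(1)] by blast
  have "pos_def (transpose L ** N ** L)"
  proof (rule pos_def_congruence[OF assms(2)])
    fix x
    assume "L *v x = 0"
    then have "(transpose L ** M ** L) *v x = 0"
      by (simp flip: matrix_vector_mul_assoc)
    then show "x = 0"
      by (simp add: LML)
  qed
  then have "ln (det (transpose L ** N ** L)) \<le> trace (transpose L ** N ** L) - CARD('n)"
    by (rule ln_det_le_trace)
  also have "\<dots> = trace (matrix_inv M ** (N - M))"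
    using trace_congruence[of L M] by (simp add: LML trace_I inv trace_congruence matrix_diff_ldistrib trace_sub)
  finally have "ln (det (transpose L ** N ** L)) \<le> trace (matrix_inv M ** (N - M))" .
  moreover have "ln (det (transpose L ** N ** L)) = ln (det N) - ln (det M)"
  proof -
    have "det (transpose L ** N ** L) * det M = det N * det (transpose L ** M ** L)"
      by (simp only: det_mul det_transpose mult_ac)
    then have "det N = det (transpose L ** N ** L) * det M"
      by (simp only: LML det_I mult_1_right)
    then have "ln (det N) = ln (det (transpose L ** N ** L)) + ln (det M)"
      using pos_def_det_pos[OF \<open>pos_def (transpose L ** N ** L)\<close>] pos_def_det_pos[OF assms(1)]
      by (simp add: ln_mult)
    then show ?thesis
      by linarith
  qed
  ultimately show ?thesis
    by linarith
qed

theorem ln_det_concave: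
  fixes M :: "'i \<Rightarrow> real^'n^'n"
  assumes "finite I" "\<And>i. i \<in> I \<Longrightarrow> pos_def (M i)" "\<And>i. i \<in> I \<Longrightarrow> 0 \<le> w i" "sum w I = 1"
  shows "(\<Sum>i\<in>I. w i * ln (det (M i))) \<le> ln (det (\<Sum>i\<in>I. w i *\<^sub>R M i))"
proof -
  define M0 where "M0 = (\<Sum>i\<in>I. w i *\<^sub>R M i)"
  define X where "X = matrix_inv M0"
  have "pos_def M0"
    unfolding M0_def using assms by (rule pos_def_convex_combination)
  have "(\<Sum>i\<in>I. w i * ln (det (M i))) \<le> (\<Sum>i\<in>I. w i * (ln (det M0) + trace (X ** (M i - M0))))"
    using assms(2,3) ln_det_le_tangent[OF \<open>pos_def M0\<close>] unfolding X_def
    by (intro sum_mono mult_left_mono) auto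
  also have "\<dots> = ln (det M0) + trace (X ** (\<Sum>i\<in>I. w i *\<^sub>R (M i - M0)))"
    by (simp add: distrib_left sum.distrib assms(4) flip: sum_distrib_right
        add: linear_sum[OF linear_trace_mult_left] linear_scale[OF linear_trace_mult_left] o_def)
  also have "(\<Sum>i\<in>I. w i *\<^sub>R (M i - M0)) = 0"
    by (simp add: scaleR_diff_right sum_subtractf M0_def assms(4) flip: scaleR_sum_left)
  finally show ?thesis
    by (simp add: M0_def trace_def)
qed

section \<open>Gram matrices\<close>

lemma gram_Nil [simp]: "gram [] = 0"
  by (simp add: gram_def vec_eq_iff)

lemma gram_append: "gram (xs @ ys) = gram xs + gram ys"
  by (simp add: gram_def vec_eq_iff)

lemma gram_Cons: "gram (w # W) = gram [w] + gram W"
  using gram_append[of "[w]" W] by simp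

lemma gram_concat: "gram (concat Vs) = (\<Sum>c<length Vs. gram (Vs!c))"
  by (induction Vs) (simp_all add: gram_append sum.lessThan_Suc_shift del: sum.lessThan_Suc)

lemma gram_map_scaleR: "gram (map (scaleR r) W) = r\<^sup>2 *\<^sub>R gram W"
  by (induction W) (simp_all add: gram_def vec_eq_iff algebra_simps power2_eq_square)

lemma scaleR_gram_eq_gram_map: "0 \<le> k \<Longrightarrow> k *\<^sub>R gram W = gram (map (scaleR (sqrt k)) W)"
  by (simp add: gram_map_scaleR)

lemma gram_mult_vector: "gram W *v z = (\<Sum>w\<leftarrow>W. (w \<bullet> z) *\<^sub>R w)"
proof (induction W)
  case (Cons w W)
  have "gram [w] *v z = (w \<bullet> z) *\<^sub>R w"
    by (simp add: gram_def vec_eq_iff matrix_vector_mult_def inner_vec_def sum_distrib_left mult_ac)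
  with Cons show ?case
    by (subst gram_Cons) (simp add: matrix_vector_mult_add_rdistrib)
qed simp

lemma gram_mult_vector_eq_0: "(\<forall>w\<in>set W. w \<bullet> z = 0) \<Longrightarrow> gram W *v z = 0"
  by (induction W) (simp_all add: gram_mult_vector)

lemma matrix_vector_mult_gram_eq_0:
  "(\<forall>w\<in>set W. A *v w = 0) \<Longrightarrow> A *v (gram W *v z) = 0"
  by (induction W) (simp_all add: gram_mult_vector matrix_vector_right_distrib matrix_vector_mult_scaleR)

lemma inner_gram_mult_vector: "x \<bullet> (gram W *v x) = (\<Sum>w\<leftarrow>W. (w \<bullet> x)\<^sup>2)"
  by (induction W) (simp_all add: gram_mult_vector inner_add_right power2_eq_square inner_commute)

lemma pos_semidef_gram: "pos_semidef (gram W)"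
  unfolding pos_semidef_def inner_gram_mult_vector
  by (auto simp: symmetric_matrix_def gram_def vec_eq_iff transpose_def mult.commute intro!: sum_list_nonneg)

lemma gram_single_congruence:
  fixes L :: "real^'n^'n"
  shows "transpose L ** gram [v] ** L = gram [transpose L *v v]"
proof -
  have "(transpose L ** gram [v] ** L) $ i $ j = (transpose L *v v) $ i * (transpose L *v v) $ j" for i j
  proof -
    have "(transpose L ** gram [v] ** L) $ i $ j
        = (\<Sum>k\<in>UNIV. \<Sum>m\<in>UNIV. (L$m$i * v$m) * (v$k * L$k$j))"
      by (simp add: matrix_matrix_mult_def transpose_def gram_def sum_distrib_left sum_distrib_right
          mult_ac)
    also have "\<dots> = (\<Sum>m\<in>UNIV. L$m$i * v$m) * (\<Sum>k\<in>UNIV. v$k * L$k$j)"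
      by (subst sum_product) (rule sum.swap)
    also have "\<dots> = (transpose L *v v) $ i * (transpose L *v v) $ j"
      by (simp add: matrix_vector_mult_def transpose_def mult_ac)
    finally show ?thesis .
  qed
  then show ?thesis
    by (simp add: vec_eq_iff gram_def)
qed

section \<open>Subadditivity of the log-determinant\<close>

lemma det_I_plus_gram_single:
  fixes w :: "real^'n"
  shows "det (mat 1 + gram [w]) = 1 + w \<bullet> w"
proof (cases "w = 0")
  case True
  then show ?thesis
    by (simp add: gram_def vec_eq_iff flip: zero_vec_def)
next
  case False
  obtain k :: 'n where True
    by simp
  obtain A where A: "orthogonal_matrix A" "A *v axis k 1 = w /\<^sub>R norm w"
    using orthogonal_matrix_exists_basis[of "w /\<^sub>R norm w"] False by auto
  have "transpose A *v w = norm w *\<^sub>R (transpose A *v (A *v axis k 1))"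
    using False by (simp add: A(2) matrix_vector_mult_scaleR)
  also have "\<dots> = norm w *\<^sub>R axis k 1"
    using A(1) by (simp add: matrix_vector_mul_assoc orthogonal_matrix)
  finally have Aw: "transpose A *v w = norm w *\<^sub>R axis k 1" .
  have "det (mat 1 + gram [w]) = det (transpose A ** (mat 1 + gram [w]) ** A)"
    using det_orthogonal_congruence[OF A(1)] by simp
  also have "transpose A ** (mat 1 + gram [w]) ** A = mat 1 + gram [norm w *\<^sub>R axis k 1]"
    using A(1) by (simp add: matrix_add_ldistrib matrix_add_rdistrib gram_single_congruence Aw[simplified]
        orthogonal_matrix)
  also have "\<dots> = diag_matrix (\<lambda>i. if i = k then 1 + (norm w)\<^sup>2 else 1)"
    by (simp add: vec_eq_iff diag_matrix_def mat_def gram_def axis_def power2_eq_square)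
  also have "det \<dots> = 1 + (norm w)\<^sup>2"
    by (simp add: det_diag_matrix prod.If_cases)
  finally show ?thesis
    by (simp add: power2_norm_eq_inner)
qed

lemma det_add_gram_single:
  fixes P :: "real^'n^'n"
  assumes "pos_def P"
  shows "det (P + gram [v]) = det P * (1 + v \<bullet> (matrix_inv P *v v))"
proof -
  obtain L :: "real^'n^'n" where LPL: "transpose L ** P ** L = mat 1"
      and inv: "matrix_inv P = L ** transpose L"
    using pos_def_congruent_to_identity[OF assms] by blast
  have "det P * (det L)\<^sup>2 = 1"
    using arg_cong[OF LPL, of det] by (simp add: det_mul power2_eq_square mult_ac)
  have "det (P + gram [v]) * (det L)\<^sup>2 = det (transpose L ** (P + gram [v]) ** L)"
    by (simp add: det_mul power2_eq_square mult_ac)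
  also have "transpose L ** (P + gram [v]) ** L = mat 1 + gram [transpose L *v v]"
    by (simp only: matrix_add_ldistrib matrix_add_rdistrib LPL gram_single_congruence)
  also have "det \<dots> = 1 + (transpose L *v v) \<bullet> (transpose L *v v)"
    by (rule det_I_plus_gram_single)
  also have "(transpose L *v v) \<bullet> (transpose L *v v) = v \<bullet> (matrix_inv P *v v)"
    by (simp add: inv dot_lmul_matrix flip: matrix_vector_mul_assoc)
  finally have "det (P + gram [v]) * (det L)\<^sup>2 = 1 + v \<bullet> (matrix_inv P *v v)" .
  then have "det (P + gram [v]) * (det P * (det L)\<^sup>2) = det P * (1 + v \<bullet> (matrix_inv P *v v))"
    by (metis mult.left_commute)
  then show ?thesis
    by (simp add: \<open>det P * (det L)\<^sup>2 = 1\<close>)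
qed

lemma pos_def_I_plus_pos_semidef_plus_gram:
  fixes A :: "real^'n^'n"
  assumes "pos_semidef A"
  shows "pos_def (mat 1 + A + gram W)"
  using pos_def_I_plus_pos_semidef[OF pos_semidef_add[OF assms pos_semidef_gram]]
  by (simp add: add.assoc)

lemma det_I_plus_pos_semidef_plus_gram_le:
  fixes A :: "real^'n^'n"
  assumes "pos_semidef A"
  shows "det (mat 1 + A + gram W) \<le> det (mat 1 + A) * det (mat 1 + gram W)"
proof (induction W)
  case (Cons v W)
  define P where "P = mat 1 + A + gram W"
  define Q where "Q = mat 1 + gram W"
  have "pos_def P" "pos_def Q"
    unfolding P_def Q_def using assms pos_semidef_gram
    by (auto intro: pos_def_I_plus_pos_semidef_plus_gram pos_def_I_plus_pos_semidef)
  have "x \<bullet> (Q *v x) \<le> x \<bullet> (P *v x)" for x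
    using assms by (simp add: P_def Q_def pos_semidef_def matrix_vector_mult_add_rdistrib inner_add_right)
  then have inv_le: "v \<bullet> (matrix_inv P *v v) \<le> v \<bullet> (matrix_inv Q *v v)"
    by (rule matrix_inv_quadratic_form_antimono[OF \<open>pos_def Q\<close> \<open>pos_def P\<close>])
  have "0 < det (mat 1 + A) * det Q"
    using pos_def_det_pos[OF \<open>pos_def Q\<close>] pos_def_det_pos[OF pos_def_I_plus_pos_semidef[OF assms]]
    by simp
  have "det (mat 1 + A + gram (v # W)) = det P * (1 + v \<bullet> (matrix_inv P *v v))"
    using det_add_gram_single[OF \<open>pos_def P\<close>] by (simp add: P_def gram_Cons[of v W] add_ac)
  also have "\<dots> \<le> det (mat 1 + A) * det Q * (1 + v \<bullet> (matrix_inv P *v v))"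
    using Cons.IH matrix_inv_quadratic_form_nonneg[OF \<open>pos_def P\<close>]
    by (intro mult_right_mono) (simp_all add: P_def Q_def)
  also have "\<dots> \<le> det (mat 1 + A) * det Q * (1 + v \<bullet> (matrix_inv Q *v v))"
    using inv_le \<open>0 < det (mat 1 + A) * det Q\<close> by (intro mult_left_mono) simp_all
  also have "\<dots> = det (mat 1 + A) * det (mat 1 + gram (v # W))"
    using det_add_gram_single[OF \<open>pos_def Q\<close>] by (simp add: Q_def gram_Cons[of v W] add_ac)
  finally show ?case .
qed simp

lemma det_I_plus_pos_semidef_plus_gram_eq:
  fixes A :: "real^'n^'n"
  assumes "pos_semidef A" "\<forall>w\<in>set W. A *v w = 0"
  shows "det (mat 1 + A + gram W) = det (mat 1 + A) * det (mat 1 + gram W)"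
  using assms(2)
proof (induction W)
  case (Cons v W)
  define P where "P = mat 1 + A + gram W"
  define Q where "Q = mat 1 + gram W"
  have "pos_def P" "pos_def Q"
    unfolding P_def Q_def using assms pos_semidef_gram
    by (auto intro: pos_def_I_plus_pos_semidef_plus_gram pos_def_I_plus_pos_semidef)
  define z where "z = matrix_inv Q *v v"
  have "Q *v z = v"
    by (simp add: z_def matrix_vector_mul_assoc pos_def_matrix_inv_right[OF \<open>pos_def Q\<close>])
  then have "z = v - gram W *v z"
    by (simp add: Q_def matrix_vector_mult_add_rdistrib algebra_simps)
  \<comment> \<open>z lies in the span of v # W, which A annihilates\<close>
  then have "A *v z = 0"
    using Cons.prems matrix_vector_mult_gram_eq_0[of W A z]
    by (metis diff_zero list.set_intros(1,2) matrix_vector_mult_diff_distrib)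
  then have "P *v z = v"
    using \<open>Q *v z = v\<close> by (simp add: P_def Q_def matrix_vector_mult_add_rdistrib)
  then have "matrix_inv P *v v = matrix_inv Q *v v"
    using pos_def_matrix_inv_right[OF \<open>pos_def P\<close>] matrix_left_right_inverse
    by (metis matrix_vector_mul_assoc matrix_vector_mul_lid z_def)
  have "det (mat 1 + A + gram (v # W)) = det P * (1 + v \<bullet> (matrix_inv P *v v))"
    using det_add_gram_single[OF \<open>pos_def P\<close>] by (simp add: P_def gram_Cons[of v W] add_ac)
  also have "\<dots> = det (mat 1 + A) * (det Q * (1 + v \<bullet> (matrix_inv Q *v v)))"
    using Cons \<open>matrix_inv P *v v = matrix_inv Q *v v\<close> by (simp add: P_def Q_def)
  also have "\<dots> = det (mat 1 + A) * det (mat 1 + gram (v # W))"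
    using det_add_gram_single[OF \<open>pos_def Q\<close>] by (simp add: Q_def gram_Cons[of v W] add_ac)
  finally show ?case .
qed simp

lemma det_I_plus_scaled_gram_pos: "0 \<le> k \<Longrightarrow> 0 < det (mat 1 + k *\<^sub>R gram W)"
  by (intro pos_def_det_pos pos_def_I_plus_pos_semidef pos_semidef_scaleR pos_semidef_gram)

lemma det_I_plus_scaled_gram_Cons:
  assumes "0 \<le> k"
  shows "det (mat 1 + k *\<^sub>R gram (concat (V # Vs)))
    = det (mat 1 + k *\<^sub>R gram (concat Vs) + gram (map (scaleR (sqrt k)) V))"
  using assms by (simp add: gram_append scaleR_add_right add_ac flip: scaleR_gram_eq_gram_map)

lemma det_I_plus_scaled_gram_concat_le:
  assumes "0 \<le> k"
  shows "det (mat 1 + k *\<^sub>R gram (concat Vs)) \<le> (\<Prod>c<length Vs. det (mat 1 + k *\<^sub>R gram (Vs!c)))"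
proof (induction Vs)
  case (Cons V Vs)
  have "det (mat 1 + k *\<^sub>R gram (concat (V # Vs)))
      \<le> det (mat 1 + k *\<^sub>R gram (concat Vs)) * det (mat 1 + k *\<^sub>R gram V)"
    unfolding det_I_plus_scaled_gram_Cons[OF assms] scaleR_gram_eq_gram_map[OF assms, of V]
    using assms by (intro det_I_plus_pos_semidef_plus_gram_le pos_semidef_scaleR pos_semidef_gram)
  also have "\<dots> \<le> (\<Prod>c<length Vs. det (mat 1 + k *\<^sub>R gram (Vs!c))) * det (mat 1 + k *\<^sub>R gram V)"
    using Cons.IH det_I_plus_scaled_gram_pos[OF assms, of V] by (intro mult_right_mono) simp_all
  finally show ?case
    by (simp add: prod.lessThan_Suc_shift mult.commute del: prod.lessThan_Suc)
qed simp

definition orthogonal_blocks :: "(real^'n) list list \<Rightarrow> bool" where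
  "orthogonal_blocks Vs \<longleftrightarrow>
     (\<forall>c1 c2 k l. c1 < c2 \<and> c2 < length Vs \<and> k < length (Vs!c1) \<and> l < length (Vs!c2)
        \<longrightarrow> (Vs!c1)!k \<bullet> (Vs!c2)!l = 0)"

lemma orthogonal_blocks_ConsD:
  assumes "orthogonal_blocks (V # Vs)"
  shows "orthogonal_blocks Vs" "\<forall>a\<in>set (concat Vs). \<forall>b\<in>set V. a \<bullet> b = 0"
proof -
  note orth = assms[unfolded orthogonal_blocks_def, rule_format]
  show "orthogonal_blocks Vs"
    unfolding orthogonal_blocks_def using orth[of "Suc c1" "Suc c2" for c1 c2] by auto
  show "\<forall>a\<in>set (concat Vs). \<forall>b\<in>set V. a \<bullet> b = 0"
  proof (intro ballI)
    fix a b
    assume "a \<in> set (concat Vs)" "b \<in> set V"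
    then obtain c k l where "c < length Vs" "k < length (Vs!c)" "a = (Vs!c)!k" "l < length V" "b = V!l"
      by (auto simp: in_set_conv_nth)
    then show "a \<bullet> b = 0"
      using orth[of 0 "Suc c" l k] by (simp add: inner_commute)
  qed
qed

lemma det_I_plus_scaled_gram_concat_eq:
  assumes "0 \<le> k" "orthogonal_blocks Vs"
  shows "det (mat 1 + k *\<^sub>R gram (concat Vs)) = (\<Prod>c<length Vs. det (mat 1 + k *\<^sub>R gram (Vs!c)))"
  using assms(2)
proof (induction Vs)
  case (Cons V Vs)
  note orth = orthogonal_blocks_ConsD[OF Cons.prems]
  have "\<forall>w\<in>set (map (scaleR (sqrt k)) V). (k *\<^sub>R gram (concat Vs)) *v w = 0"
    using orth(2)
    by (auto simp: matrix_vector_mult_scaleR intro!: gram_mult_vector_eq_0 simp flip: scaleR_matrix_vector_assoc)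
  then have "det (mat 1 + k *\<^sub>R gram (concat (V # Vs)))
      = det (mat 1 + k *\<^sub>R gram (concat Vs)) * det (mat 1 + k *\<^sub>R gram V)"
    unfolding det_I_plus_scaled_gram_Cons[OF assms(1)] scaleR_gram_eq_gram_map[OF assms(1), of V]
    using assms(1) by (intro det_I_plus_pos_semidef_plus_gram_eq pos_semidef_scaleR pos_semidef_gram)
  then show ?case
    using Cons.IH orth(1) by (simp add: prod.lessThan_Suc_shift mult.commute del: prod.lessThan_Suc)
qed simp

section \<open>TransRate\<close>

lemma real_length_concat: "real (length (concat Zs)) = (\<Sum>c<length Zs. real (length (Zs!c)))"
  by (simp add: length_concat sum_list_sum_nth atLeast0LessThan)

lemma coding_rate_Nil [simp]: "coding_rate [] eps = 0"
  by (simp add: coding_rate_def)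

lemma TrR_nonneg:
  fixes Zs :: "(real^'d) list list"
  assumes "0 \<le> eps"
  shows "0 \<le> TrR Zs eps"
proof (cases "concat Zs = []")
  case True
  then show ?thesis
    by (simp add: TrR_def True)
next
  case False
  define n where "n = real (length (concat Zs))"
  define w where "w c = real (length (Zs!c)) / n" for c
  define M where "M c = mat 1 + (1 / (real (length (Zs!c)) * eps)) *\<^sub>R gram (Zs!c)" for c
  have "n > 0"
    using False by (simp add: n_def)
  have w_sum: "(\<Sum>c<length Zs. w c) = 1"
    using \<open>n > 0\<close> by (simp add: w_def n_def real_length_concat flip: sum_divide_distrib)
  \<comment> \<open>for an empty class both sides vanish, as x / 0 = 0 and gram [] = 0\<close>
  have "w c *\<^sub>R M c = w c *\<^sub>R mat 1 + (1 / (n * eps)) *\<^sub>R gram (Zs!c)" for c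
    using \<open>n > 0\<close> by (cases "Zs!c = []") (simp_all add: w_def M_def scaleR_add_right)
  then have "(\<Sum>c<length Zs. w c *\<^sub>R M c) = mat 1 + (1 / (n * eps)) *\<^sub>R gram (concat Zs)"
    by (simp add: sum.distrib w_sum gram_concat scaleR_sum_right flip: scaleR_sum_left)
  moreover have "pos_def (M c)" for c
    unfolding M_def using assms
    by (intro pos_def_I_plus_pos_semidef pos_semidef_scaleR pos_semidef_gram) simp
  ultimately have "(\<Sum>c<length Zs. w c * ln (det (M c)))
      \<le> ln (det (mat 1 + (1 / (n * eps)) *\<^sub>R gram (concat Zs)))"
    using ln_det_concave[of "{..<length Zs}" M w] w_sum \<open>n > 0\<close> by (simp add: w_def)
  then show ?thesis
    by (simp add: TrR_def coding_rate_def n_def w_def M_def sum_distrib_left mult_ac)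
qed

lemma TrR_eq_0_if_normalized_grams_eq:
  fixes Zs :: "(real^'d) list list"
  assumes "\<forall>c<length Zs. (1 / real (length (concat Zs))) *\<^sub>R gram (concat Zs)
                          = (1 / real (length (Zs!c))) *\<^sub>R gram (Zs!c)"
  shows "TrR Zs eps = 0"
proof (cases "concat Zs = []")
  case True
  then show ?thesis
    by (simp add: TrR_def True)
next
  case False
  have "coding_rate (Zs!c) eps = coding_rate (concat Zs) eps" if "c < length Zs" for c
  proof -
    have "(1 / (real (length (Zs!c)) * eps)) *\<^sub>R gram (Zs!c)
        = (1 / eps) *\<^sub>R ((1 / real (length (Zs!c))) *\<^sub>R gram (Zs!c))"
      by simp
    also have "\<dots> = (1 / eps) *\<^sub>R ((1 / real (length (concat Zs))) *\<^sub>R gram (concat Zs))"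
      by (simp only: assms[rule_format, OF that])
    also have "\<dots> = (1 / (real (length (concat Zs)) * eps)) *\<^sub>R gram (concat Zs)"
      by simp
    finally show ?thesis
      by (simp add: coding_rate_def)
  qed
  then have "TrR Zs eps = coding_rate (concat Zs) eps
      * (1 - (\<Sum>c<length Zs. real (length (Zs!c))) / real (length (concat Zs)))"
    by (simp add: TrR_def sum_distrib_left right_diff_distrib mult_ac sum_divide_distrib)
  also have "(\<Sum>c<length Zs. real (length (Zs!c))) / real (length (concat Zs)) = 1"
    using False by (simp flip: real_length_concat)
  finally show ?thesis
    by simp
qed

definition TrR_bound :: "(real^'d) list list \<Rightarrow> real \<Rightarrow> real" where
  "TrR_bound Zs eps = 1/2 * (\<Sum>c<length Zs.
     ln (det (mat 1 + (1 / (real (length (concat Zs)) * eps)) *\<^sub>R gram (Zs!c)))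
     - real (length (Zs!c)) / real (length (concat Zs))
       * ln (det (mat 1 + (1 / (real (length (Zs!c)) * eps)) *\<^sub>R gram (Zs!c))))"

lemma TrR_bound_minus_TrR:
  "TrR_bound Zs eps - TrR Zs eps
    = 1/2 * ((\<Sum>c<length Zs. ln (det (mat 1 + (1 / (real (length (concat Zs)) * eps)) *\<^sub>R gram (Zs!c))))
             - ln (det (mat 1 + (1 / (real (length (concat Zs)) * eps)) *\<^sub>R gram (concat Zs))))"
  by (simp add: TrR_bound_def TrR_def coding_rate_def sum_subtractf right_diff_distrib
      sum_distrib_left mult_ac)

lemma ln_prod_det_I_plus_scaled_gram:
  fixes Vs :: "(real^'n) list list"
  assumes "0 \<le> k"
  shows "ln (\<Prod>c<length Vs. det (mat 1 + k *\<^sub>R gram (Vs!c)))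
    = (\<Sum>c<length Vs. ln (det (mat 1 + k *\<^sub>R gram (Vs!c))))"
proof -
  have "det (mat 1 + k *\<^sub>R gram W) \<noteq> 0" for W :: "(real^'n) list"
    using det_I_plus_scaled_gram_pos[OF assms, of W] by linarith
  then show ?thesis
    by (simp add: ln_prod)
qed

lemma TrR_le_bound:
  fixes Zs :: "(real^'d) list list"
  assumes "0 \<le> eps"
  shows "TrR Zs eps \<le> TrR_bound Zs eps"
proof -
  define k where "k = 1 / (real (length (concat Zs)) * eps)"
  have "0 \<le> k"
    using assms by (simp add: k_def)
  have "ln (det (mat 1 + k *\<^sub>R gram (concat Zs)))
      \<le> ln (\<Prod>c<length Zs. det (mat 1 + k *\<^sub>R gram (Zs!c)))"
    using det_I_plus_scaled_gram_concat_le[OF \<open>0 \<le> k\<close>] det_I_plus_scaled_gram_pos[OF \<open>0 \<le> k\<close>]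
    by (rule ln_mono)
  then show ?thesis
    using TrR_bound_minus_TrR[of Zs eps] ln_prod_det_I_plus_scaled_gram[OF \<open>0 \<le> k\<close>, of Zs]
    by (simp add: k_def)
qed

lemma TrR_eq_bound:
  fixes Zs :: "(real^'d) list list"
  assumes "0 \<le> eps" "orthogonal_blocks Zs"
  shows "TrR Zs eps = TrR_bound Zs eps"
proof -
  define k where "k = 1 / (real (length (concat Zs)) * eps)"
  have "0 \<le> k"
    using assms by (simp add: k_def)
  then show ?thesis
    using TrR_bound_minus_TrR[of Zs eps] ln_prod_det_I_plus_scaled_gram[OF \<open>0 \<le> k\<close>, of Zs]
      det_I_plus_scaled_gram_concat_eq[OF \<open>0 \<le> k\<close> assms(2)]
    by (simp add: k_def)
qed

theorem lemma3:
  fixes Zs :: "(real^'d) list list" and eps :: real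
  assumes eps: "eps > 0"
    and C: "length Zs \<ge> 1"
    and nc: "\<forall>c<length Zs. length (Zs!c) \<ge> 1"
  shows "TrR Zs eps \<ge> 0
    \<and> ((\<forall>c<length Zs. (1 / real (length (concat Zs))) *\<^sub>R gram (concat Zs)
                       = (1 / real (length (Zs!c))) *\<^sub>R gram (Zs!c))
        \<longrightarrow> TrR Zs eps = 0)
    \<and> TrR Zs eps \<le> 1/2 * (\<Sum>c<length Zs.
          ln (det (mat 1 + (1 / (real (length (concat Zs)) * eps)) *\<^sub>R gram (Zs!c)))
          - real (length (Zs!c)) / real (length (concat Zs))
            * ln (det (mat 1 + (1 / (real (length (Zs!c)) * eps)) *\<^sub>R gram (Zs!c))))
    \<and> ((\<forall>c1 c2 k l. c1 < c2 \<and> c2 < length Zs \<and> k < length (Zs!c1) \<and> l < length (Zs!c2)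
            \<longrightarrow> (Zs!c1)!k \<bullet> (Zs!c2)!l = 0)
        \<longrightarrow> TrR Zs eps = 1/2 * (\<Sum>c<length Zs.
          ln (det (mat 1 + (1 / (real (length (concat Zs)) * eps)) *\<^sub>R gram (Zs!c)))
          - real (length (Zs!c)) / real (length (concat Zs))
            * ln (det (mat 1 + (1 / (real (length (Zs!c)) * eps)) *\<^sub>R gram (Zs!c)))))"
proof -
  have "0 \<le> eps"
    using eps by simp
  then show ?thesis
    using TrR_nonneg[of eps Zs] TrR_eq_0_if_normalized_grams_eq[of Zs eps]
      TrR_le_bound[of eps Zs] TrR_eq_bound[of eps Zs]
    unfolding TrR_bound_def orthogonal_blocks_def by blast
qed

end
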